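(* Let $g(x;\theta)$ be a family of densities in the class $\mathcal{G}$ with $g(x;0)=\alpha x^{-\alpha-1}$, and let $h(x)=\frac{\partial}{\partial\theta}g(x;\theta)\big|_{\theta=0}$. Then $$b_T(\theta)=3\theta\int_1^\infty \upsilon(x)h(x)\,dx+o(\theta),\quad\theta\to0.$$
   Context: Let $X_1,\dots,X_n$ be i.i.d. on $[1,\infty)$, $F_n$ the empirical distribution function, $M_n(t)=\binom{n}{2}^{-1}\sum_{1\le i<j\le n} I\{\max(X_i/X_j,X_j/X_i)\le t\}$, $t\ge1$, and $T_n=\int_1^\infty (M_n(t)-F_n(t))\,dF_n(t)$. $\mathcal{G}$ is a class of families of densities $g(x;\theta)$ on $[1,\infty)$, $\theta$ in a neighbourhood of $0$, with $g(x;0)$ a Pareto density $\alpha x^{-\alpha-1}$ ($\alpha>0$), such that differentiation in $\theta$ under the integral sign is permitted in all integrals appearing. $b_T(\theta)$ is the limit in probability of $T_n$ when the sample has density $g(\cdot;\theta)$; equivalently $b_T(\theta)=P\{\max(X/Y,Y/X)\le Z\}-\frac12$ for $X,Y,Z$ i.i.d. with density $g(\cdot;\theta)$. Here $\upsilon(s)=\frac23\frac{\alpha\ln s}{s^\alpha}-\frac16$, $s\ge1$. *)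

theory Defs
  imports "HOL-Probability.Probability" "HOL-Library.Landau_Symbols"
begin

definition pareto_dens :: "real \<Rightarrow> real \<Rightarrow> real" where
  "pareto_dens \<alpha> x = \<alpha> * x powr (- \<alpha> - 1)"

definition upsilon :: "real \<Rightarrow> real \<Rightarrow> real" where
  "upsilon \<alpha> s = 2/3 * (\<alpha> * ln s / s powr \<alpha>) - 1/6"

definition kernT :: "real \<Rightarrow> real \<Rightarrow> real \<Rightarrow> real" where
  "kernT x y z = (if max (x / y) (y / x) \<le> z then 1 else 0)"

text \<open>b_T(theta) = P{max(X/Y,Y/X) <= Z} - 1/2 for X,Y,Z iid with density g(.;theta)
  on [1,\<infinity>); here g \<theta> x stands for g(x;\<theta>).\<close>
definition bT :: "(real \<Rightarrow> real \<Rightarrow> real) \<Rightarrow> real \<Rightarrow> real" where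
  "bT g \<theta> = (LINT x:{1..}|lborel. LINT y:{1..}|lborel. LINT z:{1..}|lborel.
      kernT x y z * g \<theta> x * g \<theta> y * g \<theta> z) - 1/2"

end

theory Submission
  imports Defs
begin

text \<open>Under the Pareto law \<open>P{max(X/Y, Y/X) \<le> Z} = 1/2\<close>, so \<open>b_T(0) = 0\<close> and it suffices to
  compute \<open>b_T'(0)\<close>, the triple integral of the kernel against \<open>h g g + g h g + g g h\<close>. Integrating
  the kernel out in closed form, variable by variable (always leaving the one carrying \<open>h\<close> for last,
  which Fubini permits because the kernel is bounded), turns it into
  \<open>2 \<integral> h(x) A(x) dx + \<integral> h(z) (1 - z^(-\<alpha>)) dz\<close>, where \<open>A(x) = \<alpha> x^(-\<alpha>) ln x + x^(-\<alpha>)/2\<close> is the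
  probability of the event given \<open>X = x\<close>. Since the densities stay normalised, \<open>\<integral> h = 0\<close>, and this
  is exactly \<open>3 \<integral> \<upsilon> h\<close>.\<close>

lemma set_integral_powr_atLeast:
  fixes \<beta> t :: real
  assumes "\<beta> > 0" and "t > 0"
  shows "set_integrable lborel {t..} (\<lambda>z. z powr (-\<beta>-1))"
    and "(LINT z:{t..}|lborel. z powr (-\<beta>-1)) = t powr (-\<beta>) / \<beta>"
proof -
  have hi: "((\<lambda>z. z powr (-\<beta>-1)) has_integral t powr (-\<beta>) / \<beta>) {t..}"
    using has_integral_powr_to_inf[of "-\<beta>-1" t] assms by simp
  then have "(\<lambda>z. z powr (-\<beta>-1)) absolutely_integrable_on {t..}"
    by (intro nonnegative_absolutely_integrable_1) (auto simp: integrable_on_def)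
  moreover have "(\<lambda>z. indicator {t..} z *\<^sub>R z powr (-\<beta>-1)) \<in> borel_measurable lborel"
    by measurable
  ultimately show si: "set_integrable lborel {t..} (\<lambda>z. z powr (-\<beta>-1))"
    unfolding set_integrable_def by (simp add: integrable_completion)
  show "(LINT z:{t..}|lborel. z powr (-\<beta>-1)) = t powr (-\<beta>) / \<beta>"
    using set_borel_integral_eq_integral(2)[OF si] hi integral_unique by metis
qed

lemma set_integral_indicator_subset:
  fixes f :: "'a \<Rightarrow> real"
  assumes "B \<subseteq> A"
  shows "(LINT z:A|M. indicator B z * f z) = (LINT z:B|M. f z)"
    and "set_integrable M A (\<lambda>z. indicator B z * f z) \<longleftrightarrow> set_integrable M B f"
proof -
  have "(\<lambda>z. indicator A z *\<^sub>R (indicator B z * f z)) = (\<lambda>z. indicator B z *\<^sub>R f z)"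
    using assms by (auto simp: fun_eq_iff split: split_indicator)
  then show "(LINT z:A|M. indicator B z * f z) = (LINT z:B|M. f z)"
    and "set_integrable M A (\<lambda>z. indicator B z * f z) \<longleftrightarrow> set_integrable M B f"
    unfolding set_lebesgue_integral_def set_integrable_def by simp_all
qed

lemma set_integral_Icc_FTC:
  fixes F f :: "real \<Rightarrow> real"
  assumes "a \<le> b"
    and F: "\<And>t. a \<le> t \<Longrightarrow> t \<le> b \<Longrightarrow> (F has_real_derivative f t) (at t)"
    and f: "continuous_on {a..b} f"
  shows "set_integrable lborel {a..b} f" and "(LINT t:{a..b}|lborel. f t) = F b - F a"
proof -
  show "set_integrable lborel {a..b} f" by (rule borel_integrable_atLeastAtMost'[OF f])
  have "integral\<^sup>L lborel (\<lambda>x. indicator {a..b} x *\<^sub>R f x) = F b - F a"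
    by (rule integral_FTC_atLeastAtMost[OF \<open>a \<le> b\<close> _ f])
       (use F in \<open>auto simp: has_real_derivative_iff_has_vector_derivative
                      intro: has_vector_derivative_at_within\<close>)
  then show "(LINT t:{a..b}|lborel. f t) = F b - F a" by (simp add: set_lebesgue_integral_def)
qed

lemma set_integral_atLeast_split:
  fixes f :: "real \<Rightarrow> real"
  assumes "a \<le> x" "set_integrable lborel {a..x} f" "set_integrable lborel {x..} f"
  shows "set_integrable lborel {a..} f"
    and "(LINT y:{a..}|lborel. f y) = (LINT y:{a..x}|lborel. f y) + (LINT y:{x..}|lborel. f y)"
proof -
  have U: "{a..} = {a..x} \<union> {x..}" using assms(1) by auto
  show "set_integrable lborel {a..} f" unfolding U using assms(2,3) by (rule set_integrable_Un) auto
  have "AE y in lborel. \<not> (y \<in> {a..x} \<and> y \<in> {x..})"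
    using AE_lborel_singleton[of x] by eventually_elim auto
  then show "(LINT y:{a..}|lborel. f y) = (LINT y:{a..x}|lborel. f y) + (LINT y:{x..}|lborel. f y)"
    unfolding U by (rule set_integral_Un_AE[OF _ _ _ assms(2,3)]) auto
qed

lemma set_integrable_mult_bounded:
  fixes \<phi> c :: "'a \<Rightarrow> real"
  assumes \<phi>: "set_integrable M A \<phi>" and c: "c \<in> borel_measurable M"
    and bound: "\<And>x. x \<in> A \<Longrightarrow> \<bar>c x\<bar> \<le> B"
  shows "set_integrable M A (\<lambda>x. \<phi> x * c x)"
proof (rule set_integrable_bound[where f="\<lambda>x. B * \<phi> x"])
  show "set_integrable M A (\<lambda>x. B * \<phi> x)" using \<phi> by simp
  have "(\<lambda>x. indicator A x * \<phi> x) \<in> borel_measurable M"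
    using \<phi> unfolding set_integrable_def by auto
  then have "(\<lambda>x. (indicator A x * \<phi> x) * c x) \<in> borel_measurable M" using c by measurable
  then show "set_borel_measurable M A (\<lambda>x. \<phi> x * c x)"
    unfolding set_borel_measurable_def by (simp add: mult.assoc)
  have "norm (\<phi> x * c x) \<le> norm (B * \<phi> x)" if "x \<in> A" for x
    using mult_left_mono[OF bound[OF that], of "\<bar>\<phi> x\<bar>"] bound[OF that]
    by (simp add: abs_mult mult.commute)
  then show "AE x in M. x \<in> A \<longrightarrow> norm (\<phi> x * c x) \<le> norm (B * \<phi> x)" by simp
qed

lemma set_integral_cong_integrable:
  assumes "A \<in> sets M" and "\<And>x. x \<in> A \<Longrightarrow> f x = g x" and "set_integrable M A g"
  shows "set_integrable M A f" and "(LINT x:A|M. f x) = (LINT x:A|M. g x)"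
  using set_integrable_cong[of M M A A f g] set_lebesgue_integral_cong[of A M f g] assms by auto

lemma set_integral_Fubini_bounded_kernel:
  fixes f g :: "real \<Rightarrow> real" and k :: "real \<Rightarrow> real \<Rightarrow> real"
  assumes f: "set_integrable lborel A f" and g: "set_integrable lborel B g"
    and k [measurable]: "(\<lambda>(x, y). k x y) \<in> borel_measurable (lborel \<Otimes>\<^sub>M lborel)"
    and k_bound: "\<And>x y. x \<in> A \<Longrightarrow> y \<in> B \<Longrightarrow> \<bar>k x y\<bar> \<le> 1"
  shows "set_integrable lborel A (\<lambda>x. f x * (LINT y:B|lborel. g y * k x y))"
    and "set_integrable lborel B (\<lambda>y. g y * (LINT x:A|lborel. f x * k x y))"
    and "(LINT x:A|lborel. f x * (LINT y:B|lborel. g y * k x y))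
       = (LINT y:B|lborel. g y * (LINT x:A|lborel. f x * k x y))"
proof -
  define F where "F x = indicator A x * f x" for x
  define G where "G y = indicator B y * g y" for y
  have iF: "integrable lborel F" and iG: "integrable lborel G"
    using f g unfolding set_integrable_def F_def G_def by simp_all
  then have [measurable]: "F \<in> borel_measurable lborel" "G \<in> borel_measurable lborel" by auto
  have dominating: "integrable (lborel \<Otimes>\<^sub>M lborel) (\<lambda>(x, y). \<bar>F x\<bar> * \<bar>G y\<bar>)"
    by (rule lborel_pair.Fubini_integrable) (use iF iG in \<open>auto simp: abs_mult\<close>)
  have dominated: "\<bar>F x * G y * k x y\<bar> \<le> \<bar>F x\<bar> * \<bar>G y\<bar>" for x y
    using k_bound[of x y] by (cases "x \<in> A \<and> y \<in> B") (auto simp: F_def G_def abs_mult mult_left_le)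
  have iK: "integrable (lborel \<Otimes>\<^sub>M lborel) (\<lambda>(x, y). F x * G y * k x y)"
    by (rule Bochner_Integration.integrable_bound[OF dominating])
       (use dominated in \<open>auto intro!: AE_I2 simp: split_beta\<close>)
  have e1: "(\<lambda>x. indicator A x *\<^sub>R (f x * (LINT y:B|lborel. g y * k x y)))
      = (\<lambda>x. \<integral>y. F x * G y * k x y \<partial>lborel)"
  proof
    fix x
    have "indicator A x *\<^sub>R (f x * (LINT y:B|lborel. g y * k x y)) = F x * (\<integral>y. G y * k x y \<partial>lborel)"
      by (simp add: F_def G_def set_lebesgue_integral_def mult.assoc)
    then show "indicator A x *\<^sub>R (f x * (LINT y:B|lborel. g y * k x y)) = (\<integral>y. F x * G y * k x y \<partial>lborel)"
      by (simp add: mult.assoc)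
  qed
  have e2: "(\<lambda>y. indicator B y *\<^sub>R (g y * (LINT x:A|lborel. f x * k x y)))
      = (\<lambda>y. \<integral>x. F x * G y * k x y \<partial>lborel)"
  proof
    fix y
    have "indicator B y *\<^sub>R (g y * (LINT x:A|lborel. f x * k x y)) = G y * (\<integral>x. F x * k x y \<partial>lborel)"
      by (simp add: F_def G_def set_lebesgue_integral_def mult.assoc)
    also have "\<dots> = (\<integral>x. G y * (F x * k x y) \<partial>lborel)" by simp
    finally show "indicator B y *\<^sub>R (g y * (LINT x:A|lborel. f x * k x y)) = (\<integral>x. F x * G y * k x y \<partial>lborel)"
      by (simp only: mult.assoc mult.left_commute)
  qed
  show "set_integrable lborel A (\<lambda>x. f x * (LINT y:B|lborel. g y * k x y))"
    unfolding set_integrable_def e1 using lborel_pair.integrable_fst[OF iK] by simp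
  show "set_integrable lborel B (\<lambda>y. g y * (LINT x:A|lborel. f x * k x y))"
    unfolding set_integrable_def e2 using lborel_pair.integrable_snd[OF iK] by simp
  have "(LINT x:A|lborel. f x * (LINT y:B|lborel. g y * k x y))
      = (\<integral>x. indicator A x *\<^sub>R (f x * (LINT y:B|lborel. g y * k x y)) \<partial>lborel)"
    unfolding set_lebesgue_integral_def[of lborel A "\<lambda>x. f x * (LINT y:B|lborel. g y * k x y)"] ..
  also have "\<dots> = (\<integral>x. (\<integral>y. F x * G y * k x y \<partial>lborel) \<partial>lborel)"
    by (simp only: e1)
  also have "\<dots> = (\<integral>y. (\<integral>x. F x * G y * k x y \<partial>lborel) \<partial>lborel)"
    using lborel_pair.Fubini_integral[OF iK] by simp
  also have "\<dots> = (\<integral>y. indicator B y *\<^sub>R (g y * (LINT x:A|lborel. f x * k x y)) \<partial>lborel)"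
    by (simp only: e2)
  also have "\<dots> = (LINT y:B|lborel. g y * (LINT x:A|lborel. f x * k x y))"
    unfolding set_lebesgue_integral_def[of lborel B "\<lambda>y. g y * (LINT x:A|lborel. f x * k x y)"] ..
  finally show "(LINT x:A|lborel. f x * (LINT y:B|lborel. g y * k x y))
      = (LINT y:B|lborel. g y * (LINT x:A|lborel. f x * k x y))" .
qed

lemma set_triple_integral_cong:
  assumes "A \<in> sets M" "B \<in> sets M" "C \<in> sets M"
    and "\<And>x y z. x \<in> A \<Longrightarrow> y \<in> B \<Longrightarrow> z \<in> C \<Longrightarrow> f x y z = f' x y z"
  shows "(LINT x:A|M. LINT y:B|M. LINT z:C|M. f x y z) = (LINT x:A|M. LINT y:B|M. LINT z:C|M. f' x y z)"
  using assms by (intro set_lebesgue_integral_cong ballI allI impI) auto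

lemma has_real_derivative_at_0_smallo:
  assumes "(f has_real_derivative D) (at 0)" and "f 0 = 0"
  shows "(\<lambda>t. f t - t * D) \<in> o[at 0](\<lambda>t. t)"
proof (rule smalloI_tendsto)
  have "((\<lambda>t. f t / t - D) \<longlongrightarrow> D - D) (at 0)"
    using assms by (intro tendsto_diff tendsto_const) (simp add: DERIV_def)
  moreover have "\<forall>\<^sub>F t in at 0. f t / t - D = (f t - t * D) / t"
    by (rule eventually_at_filter[THEN iffD2]) (simp add: field_simps)
  ultimately show "((\<lambda>t. (f t - t * D) / t) \<longlongrightarrow> 0) (at 0)"
    by (auto elim: Lim_transform_eventually)
  show "\<forall>\<^sub>F t in at (0::real). t \<noteq> 0" by (rule eventually_at_filter[THEN iffD2]) simp
qed

lemma max_min_ratio: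
  fixes x y :: real
  assumes "0 < x" "0 < y"
  shows "1 \<le> max (x/y) (y/x)" and "min (x/y) (y/x) = 1 / max (x/y) (y/x)"
proof -
  have "y/x \<le> 1 \<and> 1 \<le> x/y \<or> x/y \<le> 1 \<and> 1 \<le> y/x"
    using assms by (cases "y \<le> x") (simp_all add: divide_le_eq_1_pos le_divide_eq_1_pos)
  then show "1 \<le> max (x/y) (y/x)" and "min (x/y) (y/x) = 1 / max (x/y) (y/x)"
    by (auto simp: max_def min_def)
qed

text \<open>For \<open>X, Y, Z\<close> i.i.d. Pareto(\<open>\<alpha>\<close>), the conditional probabilities of
  \<open>max(X/Y, Y/X) \<le> Z\<close> given \<open>(X, Y) = (x, y)\<close>, given \<open>X = x\<close>, and given \<open>(X, Z) = (x, z)\<close>.\<close>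

definition kern_prob_xy :: "real \<Rightarrow> real \<Rightarrow> real \<Rightarrow> real" where
  "kern_prob_xy \<alpha> x y = min (x/y) (y/x) powr \<alpha>"

definition kern_prob_x :: "real \<Rightarrow> real \<Rightarrow> real" where
  "kern_prob_x \<alpha> x = \<alpha> * x powr (-\<alpha>) * ln x + x powr (-\<alpha>) / 2"

definition kern_prob_xz :: "real \<Rightarrow> real \<Rightarrow> real \<Rightarrow> real" where
  "kern_prob_xz \<alpha> x z = max 1 (x/z) powr (-\<alpha>) - (x*z) powr (-\<alpha>)"

definition kernT_deriv :: "real \<Rightarrow> (real \<Rightarrow> real) \<Rightarrow> real \<Rightarrow> real \<Rightarrow> real \<Rightarrow> real" where
  "kernT_deriv \<alpha> h x y z = kernT x y z *
     (h x * pareto_dens \<alpha> y * pareto_dens \<alpha> z + pareto_dens \<alpha> x * h y * pareto_dens \<alpha> z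
      + pareto_dens \<alpha> x * pareto_dens \<alpha> y * h z)"

lemma kern_prob_xy_sym: "kern_prob_xy \<alpha> x y = kern_prob_xy \<alpha> y x"
  by (simp add: kern_prob_xy_def min.commute)

lemma kern_prob_xy_eq:
  assumes "0 < y" "y \<le> x"
  shows "kern_prob_xy \<alpha> x y = (y/x) powr \<alpha>"
proof -
  have "y/x \<le> 1" "1 \<le> x/y" using assms by (simp_all add: divide_le_eq_1_pos le_divide_eq_1_pos)
  then have "min (x/y) (y/x) = y/x" by (intro min_absorb2) linarith
  then show ?thesis by (simp add: kern_prob_xy_def)
qed

lemma kern_prob_xy_measurable:
  "(\<lambda>(x, y). kern_prob_xy \<alpha> x y) \<in> borel_measurable (lborel \<Otimes>\<^sub>M lborel)"
  unfolding kern_prob_xy_def by measurable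

lemma kern_prob_xz_measurable:
  "(\<lambda>(x, z). kern_prob_xz \<alpha> x z) \<in> borel_measurable (lborel \<Otimes>\<^sub>M lborel)"
  unfolding kern_prob_xz_def by measurable

lemma kernT_measurable: "(\<lambda>(y, z). kernT x y z) \<in> borel_measurable (lborel \<Otimes>\<^sub>M lborel)"
  unfolding kernT_def by measurable

lemma kernT_eq_indicator_Icc:
  fixes x y z :: real
  assumes "1 \<le> x" "1 \<le> y" "1 \<le> z"
  shows "kernT x y z = indicator {max 1 (x/z)..x*z} y"
proof -
  have "max (x/y) (y/x) \<le> z \<longleftrightarrow> x \<le> y * z \<and> y \<le> x * z"
    using assms by (simp add: pos_divide_le_eq mult.commute)
  also have "\<dots> \<longleftrightarrow> max 1 (x/z) \<le> y \<and> y \<le> x * z"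
    using assms by (simp add: pos_divide_le_eq)
  finally show ?thesis by (simp add: kernT_def indicator_def)
qed

lemma max_le_mult:
  fixes x z :: real
  assumes "1 \<le> x" "1 \<le> z"
  shows "max 1 (x/z) \<le> x * z"
proof -
  have "x/z \<le> x" using assms by (simp add: divide_le_eq)
  moreover have "x \<le> x * z" using assms by simp
  ultimately show ?thesis using assms by linarith
qed

lemma abs_kernT_le_1: "\<bar>kernT x y z\<bar> \<le> 1"
  by (simp add: kernT_def)

context
  fixes \<alpha> :: real
  assumes alpha_pos: "\<alpha> > 0"
begin

lemma pareto_dens_nonneg: "0 \<le> pareto_dens \<alpha> x"
  using alpha_pos by (simp add: pareto_dens_def)

lemma pareto_dens_tail:
  assumes "t > 0"
  shows "set_integrable lborel {t..} (pareto_dens \<alpha>)"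
    and "(LINT z:{t..}|lborel. pareto_dens \<alpha> z) = t powr (-\<alpha>)"
  using set_integral_powr_atLeast[OF alpha_pos assms] alpha_pos
  by (simp_all add: pareto_dens_def[abs_def])

lemma pareto_dens_integral:
  shows "set_integrable lborel {1..} (pareto_dens \<alpha>)"
    and "(LINT z:{1..}|lborel. pareto_dens \<alpha> z) = 1"
  using pareto_dens_tail[of 1] by simp_all

lemma pareto_tail_double_exponent:
  assumes "t > 0"
  shows "set_integrable lborel {t..} (\<lambda>z. \<alpha> * z powr (-(2*\<alpha>)-1))"
    and "(LINT z:{t..}|lborel. \<alpha> * z powr (-(2*\<alpha>)-1)) = t powr (-(2*\<alpha>)) / 2"
  using set_integral_powr_atLeast[of "2*\<alpha>" t] alpha_pos assms by simp_all

lemma kern_prob_xy_bounds: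
  assumes "1 \<le> x" "1 \<le> y"
  shows "0 \<le> kern_prob_xy \<alpha> x y" and "\<bar>kern_prob_xy \<alpha> x y\<bar> \<le> 1"
proof -
  have "1 \<le> max (x/y) (y/x)" using max_min_ratio(1) assms by simp
  then have "min (x/y) (y/x) \<le> 1" using max_min_ratio(2) assms by simp
  then have "kern_prob_xy \<alpha> x y \<le> 1"
    unfolding kern_prob_xy_def using alpha_pos assms by (intro powr_le1) auto
  then show "0 \<le> kern_prob_xy \<alpha> x y" and "\<bar>kern_prob_xy \<alpha> x y\<bar> \<le> 1"
    by (simp_all add: kern_prob_xy_def)
qed

lemma kernT_integral_z:
  assumes "1 \<le> x" "1 \<le> y"
  shows "set_integrable lborel {1..} (\<lambda>z. kernT x y z * pareto_dens \<alpha> z)"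
    and "(LINT z:{1..}|lborel. kernT x y z * pareto_dens \<alpha> z) = kern_prob_xy \<alpha> x y"
proof -
  define m where "m = max (x/y) (y/x)"
  have m: "1 \<le> m" "min (x/y) (y/x) = 1 / m"
    using max_min_ratio assms by (simp_all add: m_def)
  have k: "kernT x y z = indicator {m..} z" for z
    by (simp add: kernT_def m_def indicator_def)
  have sub: "{m..} \<subseteq> {1..}" using m by auto
  show "set_integrable lborel {1..} (\<lambda>z. kernT x y z * pareto_dens \<alpha> z)"
    unfolding k set_integral_indicator_subset(2)[OF sub] using pareto_dens_tail m by simp
  have "(LINT z:{1..}|lborel. kernT x y z * pareto_dens \<alpha> z) = m powr (-\<alpha>)"
    unfolding k set_integral_indicator_subset(1)[OF sub] using pareto_dens_tail m by simp
  also have "\<dots> = kern_prob_xy \<alpha> x y"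
    using m by (simp add: kern_prob_xy_def powr_minus_divide powr_divide)
  finally show "(LINT z:{1..}|lborel. kernT x y z * pareto_dens \<alpha> z) = kern_prob_xy \<alpha> x y" .
qed

lemma kern_prob_xy_integral:
  assumes x: "1 \<le> x"
  shows "set_integrable lborel {1..} (\<lambda>y. pareto_dens \<alpha> y * kern_prob_xy \<alpha> x y)"
    and "(LINT y:{1..}|lborel. pareto_dens \<alpha> y * kern_prob_xy \<alpha> x y) = kern_prob_x \<alpha> x"
proof -
  let ?f = "\<lambda>y. pareto_dens \<alpha> y * kern_prob_xy \<alpha> x y"
  have f_Icc: "?f y = \<alpha> * x powr (-\<alpha>) * (1/y)" if "y \<in> {1..x}" for y
  proof -
    have y: "1 \<le> y" "y \<le> x" using that by auto
    then have "?f y = \<alpha> * (y powr (-\<alpha>-1) * y powr \<alpha>) / x powr \<alpha>"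
      by (simp add: kern_prob_xy_eq pareto_dens_def powr_divide)
    also have "y powr (-\<alpha>-1) * y powr \<alpha> = 1/y"
      using y by (simp add: powr_add[symmetric] powr_minus_divide)
    finally show ?thesis by (simp add: powr_minus_divide)
  qed
  have d: "((\<lambda>y. \<alpha> * x powr (-\<alpha>) * ln y) has_real_derivative \<alpha> * x powr (-\<alpha>) * (1/t)) (at t)"
    if "1 \<le> t" for t
    using that by (auto intro!: derivative_eq_intros)
  have c: "continuous_on {1..x} (\<lambda>y. \<alpha> * x powr (-\<alpha>) * (1/y))"
    by (intro continuous_intros) auto
  note FTC = set_integral_Icc_FTC[OF x d c]
  have I1: "set_integrable lborel {1..x} ?f" "(LINT y:{1..x}|lborel. ?f y) = \<alpha> * x powr (-\<alpha>) * ln x"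
    using set_integral_cong_integrable[OF _ f_Icc FTC(1)] FTC(2) by simp_all
  have f_Ici: "?f y = x powr \<alpha> * (\<alpha> * y powr (-(2*\<alpha>)-1))" if "y \<in> {x..}" for y
  proof -
    have y: "1 \<le> y" "x \<le> y" using that x by auto
    have "kern_prob_xy \<alpha> x y = (x/y) powr \<alpha>"
      using kern_prob_xy_eq[of x y] kern_prob_xy_sym x y by simp
    then have "?f y = x powr \<alpha> * (\<alpha> * (y powr (-\<alpha>-1) * y powr (-\<alpha>)))"
      using x y by (simp add: pareto_dens_def powr_divide powr_minus divide_simps)
    also have "y powr (-\<alpha>-1) * y powr (-\<alpha>) = y powr (-(2*\<alpha>)-1)"
      using y by (simp add: powr_add[symmetric])
    finally show ?thesis .
  qed
  have x0: "0 < x" using x by simp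
  have tail: "set_integrable lborel {x..} (\<lambda>y. x powr \<alpha> * (\<alpha> * y powr (-(2*\<alpha>)-1)))"
    using pareto_tail_double_exponent(1)[OF x0] by simp
  note I = set_integral_cong_integrable[OF _ f_Ici tail]
  have "(LINT y:{x..}|lborel. ?f y) = x powr \<alpha> * (LINT y:{x..}|lborel. \<alpha> * y powr (-(2*\<alpha>)-1))"
    using I(2) by simp
  also have "\<dots> = x powr \<alpha> * (x powr (-(2*\<alpha>)) / 2)"
    by (simp only: pareto_tail_double_exponent(2)[OF x0])
  also have "\<dots> = x powr (-\<alpha>) / 2"
    using x by (simp add: powr_add[symmetric])
  finally have I2: "set_integrable lborel {x..} ?f" "(LINT y:{x..}|lborel. ?f y) = x powr (-\<alpha>) / 2"
    using I(1) by simp_all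
  show "set_integrable lborel {1..} ?f" and "(LINT y:{1..}|lborel. ?f y) = kern_prob_x \<alpha> x"
    using set_integral_atLeast_split[OF x I1(1) I2(1)] I1(2) I2(2) by (simp_all add: kern_prob_x_def)
qed

lemma kernT_integral_y:
  assumes x: "1 \<le> x" and z: "1 \<le> z"
  shows "set_integrable lborel {1..} (\<lambda>y. pareto_dens \<alpha> y * kernT x y z)"
    and "(LINT y:{1..}|lborel. pareto_dens \<alpha> y * kernT x y z) = kern_prob_xz \<alpha> x z"
proof -
  define a where "a = max 1 (x/z)"
  define b where "b = x * z"
  have ab: "1 \<le> a" "a \<le> b" using max_le_mult[OF x z] by (simp_all add: a_def b_def)
  have k: "pareto_dens \<alpha> y * kernT x y z = indicator {a..b} y * pareto_dens \<alpha> y" if "y \<in> {1..}" for y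
    using kernT_eq_indicator_Icc[OF x _ z, of y] that by (simp add: a_def b_def)
  have d: "((\<lambda>y. - (y powr (-\<alpha>))) has_real_derivative pareto_dens \<alpha> t) (at t)" if "a \<le> t" for t
    using that ab by (auto intro!: derivative_eq_intros simp: pareto_dens_def)
  have c: "continuous_on {a..b} (pareto_dens \<alpha>)"
    unfolding pareto_dens_def[abs_def] using ab by (intro continuous_intros) auto
  note F = set_integral_Icc_FTC[OF ab(2) d c]
  have sub: "{a..b} \<subseteq> {1..}" using ab by auto
  have "set_integrable lborel {1..} (\<lambda>y. indicator {a..b} y * pareto_dens \<alpha> y)"
    using F(1) set_integral_indicator_subset(2)[OF sub] by simp
  note I = set_integral_cong_integrable[OF _ k this]
  show "set_integrable lborel {1..} (\<lambda>y. pareto_dens \<alpha> y * kernT x y z)"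
    using I(1) by simp
  show "(LINT y:{1..}|lborel. pareto_dens \<alpha> y * kernT x y z) = kern_prob_xz \<alpha> x z"
    using I(2) F(2) set_integral_indicator_subset(1)[OF sub]
    by (simp add: kern_prob_xz_def a_def b_def)
qed

lemma kern_prob_xz_bound:
  assumes "1 \<le> x" "1 \<le> z"
  shows "\<bar>kern_prob_xz \<alpha> x z\<bar> \<le> 1"
proof -
  define a where "a = max 1 (x/z)"
  define b where "b = x * z"
  have ab: "1 \<le> a" "a \<le> b" using max_le_mult[OF assms] by (simp_all add: a_def b_def)
  have "b powr (-\<alpha>) \<le> a powr (-\<alpha>)" using ab alpha_pos by (intro powr_mono2') auto
  moreover have "a powr (-\<alpha>) \<le> 1" using powr_mono2'[of "-\<alpha>" 1 a] ab alpha_pos by simp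
  moreover have "0 \<le> b powr (-\<alpha>)" by simp
  ultimately show ?thesis
    unfolding kern_prob_xz_def a_def[symmetric] b_def[symmetric] abs_le_iff by linarith
qed

lemma kern_prob_xz_integral:
  assumes z: "1 \<le> z"
  shows "set_integrable lborel {1..} (\<lambda>x. pareto_dens \<alpha> x * kern_prob_xz \<alpha> x z)"
    and "(LINT x:{1..}|lborel. pareto_dens \<alpha> x * kern_prob_xz \<alpha> x z) = 1 - z powr (-\<alpha>)"
proof -
  let ?f = "\<lambda>x. pareto_dens \<alpha> x * kern_prob_xz \<alpha> x z"
  let ?g = "\<lambda>x. \<alpha> * x powr (-(2*\<alpha>)-1)"
  have z0: "0 < z" using z by simp
  have pw: "x powr (-\<alpha>-1) * x powr (-\<alpha>) = x powr (-(2*\<alpha>)-1)" if "x > 0" for x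
    using that by (simp add: powr_add[symmetric])
  have f_Icc: "?f x = \<alpha> * x powr (-\<alpha>-1) - z powr (-\<alpha>) * ?g x" if "x \<in> {1..z}" for x
  proof -
    have x: "1 \<le> x" "x \<le> z" using that by auto
    then have "max 1 (x/z) = 1" using z by (simp add: divide_le_eq_1_pos)
    then have "?f x = \<alpha> * x powr (-\<alpha>-1) - z powr (-\<alpha>) * (\<alpha> * (x powr (-\<alpha>-1) * x powr (-\<alpha>)))"
      using x z by (simp add: kern_prob_xz_def pareto_dens_def powr_mult algebra_simps)
    then show ?thesis using pw[of x] x by simp
  qed
  define H where "H x = - (x powr (-\<alpha>)) + z powr (-\<alpha>) * (x powr (-(2*\<alpha>)) / 2)" for x
  have d: "(H has_real_derivative (\<alpha> * t powr (-\<alpha>-1) - z powr (-\<alpha>) * ?g t)) (at t)" if "1 \<le> t" for t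
    using that unfolding H_def by (auto intro!: derivative_eq_intros simp: algebra_simps)
  have c: "continuous_on {1..z} (\<lambda>t. \<alpha> * t powr (-\<alpha>-1) - z powr (-\<alpha>) * ?g t)"
    by (intro continuous_intros) auto
  note FTC = set_integral_Icc_FTC[OF z d c]
  have I1: "set_integrable lborel {1..z} ?f" "(LINT x:{1..z}|lborel. ?f x) = H z - H 1"
    using set_integral_cong_integrable[OF _ f_Icc FTC(1)] FTC(2) by simp_all
  have f_Ici: "?f x = (z powr \<alpha> - z powr (-\<alpha>)) * ?g x" if "x \<in> {z..}" for x
  proof -
    have x: "1 \<le> x" "z \<le> x" using that z by auto
    then have "max 1 (x/z) = x/z" using z by (simp add: le_divide_eq_1_pos)
    moreover have "(x/z) powr (-\<alpha>) = x powr (-\<alpha>) * z powr \<alpha>"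
      using x z by (simp add: powr_divide powr_minus divide_simps)
    ultimately have "?f x = (z powr \<alpha> - z powr (-\<alpha>)) * (\<alpha> * (x powr (-\<alpha>-1) * x powr (-\<alpha>)))"
      using x z by (simp add: kern_prob_xz_def pareto_dens_def powr_mult algebra_simps)
    then show ?thesis using pw[of x] x by simp
  qed
  have tail: "set_integrable lborel {z..} (\<lambda>x. (z powr \<alpha> - z powr (-\<alpha>)) * ?g x)"
    using pareto_tail_double_exponent(1)[OF z0] by simp
  note I = set_integral_cong_integrable[OF _ f_Ici tail]
  have "(LINT x:{z..}|lborel. ?f x) = (z powr \<alpha> - z powr (-\<alpha>)) * (LINT x:{z..}|lborel. ?g x)"
    using I(2) by simp
  also have "\<dots> = (z powr \<alpha> - z powr (-\<alpha>)) * (z powr (-(2*\<alpha>)) / 2)"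
    by (simp only: pareto_tail_double_exponent(2)[OF z0])
  finally have I2: "set_integrable lborel {z..} ?f"
    "(LINT x:{z..}|lborel. ?f x) = (z powr \<alpha> - z powr (-\<alpha>)) * (z powr (-(2*\<alpha>)) / 2)"
    using I(1) by simp_all
  note split = set_integral_atLeast_split[OF z I1(1) I2(1)]
  show "set_integrable lborel {1..} ?f" by (rule split(1))
  have "z powr \<alpha> * z powr (-(2*\<alpha>)) = z powr (-\<alpha>)" using z0 by (simp add: powr_add[symmetric])
  then show "(LINT x:{1..}|lborel. ?f x) = 1 - z powr (-\<alpha>)"
    unfolding split(2) I1(2) I2(2) H_def by (simp add: field_simps)
qed

lemma integral_pareto_kern_prob_xy:
  assumes \<phi>: "set_integrable lborel {1..} \<phi>"
  shows "set_integrable lborel {1..}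
      (\<lambda>x. pareto_dens \<alpha> x * (LINT y:{1..}|lborel. \<phi> y * kern_prob_xy \<alpha> x y))"
    and "(LINT x:{1..}|lborel. pareto_dens \<alpha> x * (LINT y:{1..}|lborel. \<phi> y * kern_prob_xy \<alpha> x y))
      = (LINT y:{1..}|lborel. \<phi> y * kern_prob_x \<alpha> y)"
proof -
  have "\<bar>kern_prob_xy \<alpha> x y\<bar> \<le> 1" if "x \<in> {1..}" "y \<in> {1..}" for x y
    using kern_prob_xy_bounds(2) that by simp
  note Fubini = set_integral_Fubini_bounded_kernel[OF pareto_dens_integral(1) \<phi>
      kern_prob_xy_measurable this]
  show "set_integrable lborel {1..}
      (\<lambda>x. pareto_dens \<alpha> x * (LINT y:{1..}|lborel. \<phi> y * kern_prob_xy \<alpha> x y))"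
    by (rule Fubini(1))
  have "(LINT x:{1..}|lborel. pareto_dens \<alpha> x * kern_prob_xy \<alpha> x y) = kern_prob_x \<alpha> y" if "1 \<le> y" for y
    using kern_prob_xy_integral(2)[OF that] by (simp add: kern_prob_xy_sym)
  then have "(LINT y:{1..}|lborel. \<phi> y * (LINT x:{1..}|lborel. pareto_dens \<alpha> x * kern_prob_xy \<alpha> x y))
      = (LINT y:{1..}|lborel. \<phi> y * kern_prob_x \<alpha> y)"
    by (intro set_lebesgue_integral_cong) auto
  with Fubini(3) show "(LINT x:{1..}|lborel. pareto_dens \<alpha> x * (LINT y:{1..}|lborel. \<phi> y * kern_prob_xy \<alpha> x y))
      = (LINT y:{1..}|lborel. \<phi> y * kern_prob_x \<alpha> y)" by simp
qed

lemma integral_pareto_pareto_kernT: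
  assumes \<phi>: "set_integrable lborel {1..} \<phi>"
  shows "\<And>x. 1 \<le> x \<Longrightarrow> set_integrable lborel {1..}
       (\<lambda>y. pareto_dens \<alpha> y * (LINT z:{1..}|lborel. \<phi> z * kernT x y z))"
    and "set_integrable lborel {1..} (\<lambda>x. pareto_dens \<alpha> x *
       (LINT y:{1..}|lborel. pareto_dens \<alpha> y * (LINT z:{1..}|lborel. \<phi> z * kernT x y z)))"
    and "(LINT x:{1..}|lborel. pareto_dens \<alpha> x *
       (LINT y:{1..}|lborel. pareto_dens \<alpha> y * (LINT z:{1..}|lborel. \<phi> z * kernT x y z)))
     = (LINT z:{1..}|lborel. \<phi> z * (1 - z powr (-\<alpha>)))"
proof -
  note Fubini_y = set_integral_Fubini_bounded_kernel[OF pareto_dens_integral(1) \<phi>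
      kernT_measurable abs_kernT_le_1]
  show "\<And>x. 1 \<le> x \<Longrightarrow> set_integrable lborel {1..}
       (\<lambda>y. pareto_dens \<alpha> y * (LINT z:{1..}|lborel. \<phi> z * kernT x y z))"
    by (rule Fubini_y(1))
  have "(LINT z:{1..}|lborel. \<phi> z * (LINT y:{1..}|lborel. pareto_dens \<alpha> y * kernT x y z))
     = (LINT z:{1..}|lborel. \<phi> z * kern_prob_xz \<alpha> x z)" if "1 \<le> x" for x
    using kernT_integral_y(2)[OF that] by (intro set_lebesgue_integral_cong) auto
  then have inner: "pareto_dens \<alpha> x *
       (LINT y:{1..}|lborel. pareto_dens \<alpha> y * (LINT z:{1..}|lborel. \<phi> z * kernT x y z))
     = pareto_dens \<alpha> x * (LINT z:{1..}|lborel. \<phi> z * kern_prob_xz \<alpha> x z)" if "x \<in> {1..}" for x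
    using Fubini_y(3)[of x] that by simp
  have "\<bar>kern_prob_xz \<alpha> x z\<bar> \<le> 1" if "x \<in> {1..}" "z \<in> {1..}" for x z
    using kern_prob_xz_bound that by simp
  note Fubini_x = set_integral_Fubini_bounded_kernel[OF pareto_dens_integral(1) \<phi>
      kern_prob_xz_measurable this]
  note outer = set_integral_cong_integrable[OF _ inner Fubini_x(1)]
  show "set_integrable lborel {1..} (\<lambda>x. pareto_dens \<alpha> x *
       (LINT y:{1..}|lborel. pareto_dens \<alpha> y * (LINT z:{1..}|lborel. \<phi> z * kernT x y z)))"
    using outer(1) by simp
  have "(LINT z:{1..}|lborel. \<phi> z * (LINT x:{1..}|lborel. pareto_dens \<alpha> x * kern_prob_xz \<alpha> x z))
     = (LINT z:{1..}|lborel. \<phi> z * (1 - z powr (-\<alpha>)))"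
    using kern_prob_xz_integral(2) by (intro set_lebesgue_integral_cong) auto
  then show "(LINT x:{1..}|lborel. pareto_dens \<alpha> x *
       (LINT y:{1..}|lborel. pareto_dens \<alpha> y * (LINT z:{1..}|lborel. \<phi> z * kernT x y z)))
     = (LINT z:{1..}|lborel. \<phi> z * (1 - z powr (-\<alpha>)))"
    using outer(2) Fubini_x(3) by simp
qed

lemma kern_prob_x_bound:
  assumes "1 \<le> x"
  shows "\<bar>kern_prob_x \<alpha> x\<bar> \<le> 1"
proof -
  note A = kern_prob_xy_integral[OF assms]
  have "(LINT y:{1..}|lborel. pareto_dens \<alpha> y * kern_prob_xy \<alpha> x y) \<le> (LINT y:{1..}|lborel. pareto_dens \<alpha> y)"
    using kern_prob_xy_bounds[OF assms] pareto_dens_nonneg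
    by (intro set_integral_mono[OF A(1) pareto_dens_integral(1)]) (auto intro: mult_left_le)
  moreover have "0 \<le> (LINT y:{1..}|lborel. pareto_dens \<alpha> y * kern_prob_xy \<alpha> x y)"
    unfolding set_lebesgue_integral_def using kern_prob_xy_bounds(1)[OF assms] pareto_dens_nonneg
    by (intro Bochner_Integration.integral_nonneg) (simp split: split_indicator)
  ultimately show ?thesis using A(2) pareto_dens_integral(2) by simp
qed

lemma set_integrable_mult_kern_prob_x:
  assumes "set_integrable lborel {1..} h"
  shows "set_integrable lborel {1..} (\<lambda>x. h x * kern_prob_x \<alpha> x)"
  using assms kern_prob_x_bound unfolding kern_prob_x_def by (intro set_integrable_mult_bounded) auto

lemma pareto_kernT_triple_integral:
  "(LINT x:{1..}|lborel. LINT y:{1..}|lborel. LINT z:{1..}|lborel.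
      kernT x y z * pareto_dens \<alpha> x * pareto_dens \<alpha> y * pareto_dens \<alpha> z) = 1/2"
proof -
  let ?p = "pareto_dens \<alpha>"
  have pz: "?p z * (1 - z powr (-\<alpha>)) = ?p z - \<alpha> * z powr (-(2*\<alpha>)-1)" if "1 \<le> z" for z
  proof -
    have "z powr (-\<alpha>-1) * z powr (-\<alpha>) = z powr (-(2*\<alpha>)-1)"
      using that by (simp add: powr_add[symmetric])
    then show ?thesis by (simp add: pareto_dens_def algebra_simps)
  qed
  have "(LINT x:{1..}|lborel. LINT y:{1..}|lborel. LINT z:{1..}|lborel. kernT x y z * ?p x * ?p y * ?p z)
      = (LINT x:{1..}|lborel. ?p x * (LINT y:{1..}|lborel. ?p y * (LINT z:{1..}|lborel. ?p z * kernT x y z)))"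
    by (simp only: mult.commute[of "kernT _ _ _"] mult.assoc set_integral_mult_right)
  also have "\<dots> = (LINT z:{1..}|lborel. ?p z * (1 - z powr (-\<alpha>)))"
    by (rule integral_pareto_pareto_kernT(3)[OF pareto_dens_integral(1)])
  also have "\<dots> = (LINT z:{1..}|lborel. ?p z - \<alpha> * z powr (-(2*\<alpha>)-1))"
    using pz by (intro set_lebesgue_integral_cong) auto
  also have "\<dots> = (LINT z:{1..}|lborel. ?p z) - (LINT z:{1..}|lborel. \<alpha> * z powr (-(2*\<alpha>)-1))"
    using pareto_dens_integral(1) pareto_tail_double_exponent(1)[of 1] by (intro set_integral_diff) auto
  also have "\<dots> = 1/2"
    using pareto_dens_integral(2) pareto_tail_double_exponent(2)[of 1] by simp
  finally show ?thesis .
qed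

lemma kernT_deriv_integral_z:
  assumes h: "set_integrable lborel {1..} h" and x: "1 \<le> x" and y: "1 \<le> y"
  shows "(LINT z:{1..}|lborel. kernT_deriv \<alpha> h x y z)
    = (h x * pareto_dens \<alpha> y + pareto_dens \<alpha> x * h y) * kern_prob_xy \<alpha> x y
      + pareto_dens \<alpha> x * pareto_dens \<alpha> y * (LINT z:{1..}|lborel. h z * kernT x y z)"
proof -
  let ?p = "pareto_dens \<alpha>"
  have "(\<lambda>z. kernT_deriv \<alpha> h x y z)
    = (\<lambda>z. (h x * ?p y + ?p x * h y) * (kernT x y z * ?p z) + ?p x * ?p y * (h z * kernT x y z))"
    by (auto simp: kernT_deriv_def algebra_simps)
  moreover have "set_integrable lborel {1..} (\<lambda>z. h z * kernT x y z)"
    using h kernT_measurable abs_kernT_le_1 by (intro set_integrable_mult_bounded) auto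
  ultimately show ?thesis
    using kernT_integral_z[OF x y] by simp
qed

lemma kernT_deriv_integral_yz:
  assumes h: "set_integrable lborel {1..} h" and x: "1 \<le> x"
  shows "(LINT y:{1..}|lborel. LINT z:{1..}|lborel. kernT_deriv \<alpha> h x y z)
    = h x * kern_prob_x \<alpha> x + pareto_dens \<alpha> x * (LINT y:{1..}|lborel. h y * kern_prob_xy \<alpha> x y)
      + pareto_dens \<alpha> x * (LINT y:{1..}|lborel. pareto_dens \<alpha> y * (LINT z:{1..}|lborel. h z * kernT x y z))"
proof -
  let ?p = "pareto_dens \<alpha>"
  have "(LINT y:{1..}|lborel. LINT z:{1..}|lborel. kernT_deriv \<alpha> h x y z)
    = (LINT y:{1..}|lborel. h x * (?p y * kern_prob_xy \<alpha> x y) + ?p x * (h y * kern_prob_xy \<alpha> x y)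
        + ?p x * (?p y * (LINT z:{1..}|lborel. h z * kernT x y z)))"
    using kernT_deriv_integral_z[OF h x] by (intro set_lebesgue_integral_cong) (auto simp: algebra_simps)
  moreover have "set_integrable lborel {1..} (\<lambda>y. h x * (?p y * kern_prob_xy \<alpha> x y))"
    using kern_prob_xy_integral(1)[OF x] by simp
  moreover have "set_integrable lborel {1..} (\<lambda>y. ?p x * (h y * kern_prob_xy \<alpha> x y))"
    using h kern_prob_xy_bounds(2)[OF x] unfolding kern_prob_xy_def
    by (intro set_integrable_mult_right set_integrable_mult_bounded) auto
  moreover have "set_integrable lborel {1..} (\<lambda>y. ?p x * (?p y * (LINT z:{1..}|lborel. h z * kernT x y z)))"
    using integral_pareto_pareto_kernT(1)[OF h x] by simp
  ultimately show ?thesis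
    using kern_prob_xy_integral(2)[OF x] by simp
qed

lemma kernT_deriv_triple_integral:
  assumes h: "set_integrable lborel {1..} h"
  shows "(LINT x:{1..}|lborel. LINT y:{1..}|lborel. LINT z:{1..}|lborel. kernT_deriv \<alpha> h x y z)
    = 2 * (LINT x:{1..}|lborel. h x * kern_prob_x \<alpha> x) + (LINT z:{1..}|lborel. h z * (1 - z powr (-\<alpha>)))"
proof -
  let ?p = "pareto_dens \<alpha>"
  have "(LINT x:{1..}|lborel. LINT y:{1..}|lborel. LINT z:{1..}|lborel. kernT_deriv \<alpha> h x y z)
    = (LINT x:{1..}|lborel. h x * kern_prob_x \<alpha> x + ?p x * (LINT y:{1..}|lborel. h y * kern_prob_xy \<alpha> x y)
        + ?p x * (LINT y:{1..}|lborel. ?p y * (LINT z:{1..}|lborel. h z * kernT x y z)))"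
    using kernT_deriv_integral_yz[OF h] by (intro set_lebesgue_integral_cong) auto
  then show ?thesis
    using set_integrable_mult_kern_prob_x[OF h] integral_pareto_kern_prob_xy[OF h]
      integral_pareto_pareto_kernT(2,3)[OF h]
    by simp
qed

lemma upsilon_integral:
  assumes h: "set_integrable lborel {1..} h"
  shows "3 * (LINT x:{1..}|lborel. upsilon \<alpha> x * h x)
    = 2 * (LINT x:{1..}|lborel. h x * kern_prob_x \<alpha> x) + (LINT x:{1..}|lborel. h x * (1 - x powr (-\<alpha>)))
      - 3/2 * (LINT x:{1..}|lborel. h x)"
proof -
  have "upsilon \<alpha> x * h x = 2/3 * (h x * kern_prob_x \<alpha> x) + 1/3 * (h x * (1 - x powr (-\<alpha>))) - 1/2 * h x"
    if "1 \<le> x" for x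
  proof -
    have "x powr (-\<alpha>) = 1 / x powr \<alpha>" by (simp add: powr_minus_divide)
    moreover have "x powr \<alpha> > 0" using that by simp
    ultimately show ?thesis by (simp add: upsilon_def kern_prob_x_def field_simps)
  qed
  then have "(LINT x:{1..}|lborel. upsilon \<alpha> x * h x)
    = (LINT x:{1..}|lborel. 2/3 * (h x * kern_prob_x \<alpha> x) + 1/3 * (h x * (1 - x powr (-\<alpha>))) - 1/2 * h x)"
    by (intro set_lebesgue_integral_cong) auto
  also have "\<dots> = 2/3 * (LINT x:{1..}|lborel. h x * kern_prob_x \<alpha> x)
      + 1/3 * (LINT x:{1..}|lborel. h x * (1 - x powr (-\<alpha>))) - 1/2 * (LINT x:{1..}|lborel. h x)"
  proof -
    have "set_integrable lborel {1..} (\<lambda>x. h x * (1 - x powr (-\<alpha>)))"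
    proof (intro set_integrable_mult_bounded[OF h])
      show "\<bar>1 - x powr (-\<alpha>)\<bar> \<le> 1" if "x \<in> {1..}" for x
        using powr_mono2'[of "-\<alpha>" 1 x] that alpha_pos by (simp add: abs_le_iff)
    qed simp
    then show ?thesis using h set_integrable_mult_kern_prob_x[OF h]
      by (simp add: set_integral_add set_integral_diff)
  qed
  finally show ?thesis by simp
qed

end

theorem lemma2:
  fixes g :: "real \<Rightarrow> real \<Rightarrow> real" and h :: "real \<Rightarrow> real" and \<alpha> \<delta> :: real
  assumes alpha_pos: "\<alpha> > 0"
    and delta_pos: "\<delta> > 0"
    and density: "\<And>\<theta>. \<bar>\<theta>\<bar> < \<delta> \<Longrightarrow>
        (\<forall>x\<ge>1. g \<theta> x \<ge> 0) \<and> set_integrable lborel {1..} (g \<theta>)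
        \<and> (LINT x:{1..}|lborel. g \<theta> x) = 1"
    and g0: "\<And>x. x \<ge> 1 \<Longrightarrow> g 0 x = pareto_dens \<alpha> x"
    and h_deriv: "\<And>x. x \<ge> 1 \<Longrightarrow> ((\<lambda>\<theta>. g \<theta> x) has_real_derivative h x) (at 0)"
    and h_int: "set_integrable lborel {1..} h"
    and diff_norm: "((\<lambda>\<theta>. LINT x:{1..}|lborel. g \<theta> x)
        has_real_derivative (LINT x:{1..}|lborel. h x)) (at 0)"
    and diff_bT: "(bT g has_real_derivative
        (LINT x:{1..}|lborel. LINT y:{1..}|lborel. LINT z:{1..}|lborel.
           kernT x y z * (h x * g 0 y * g 0 z + g 0 x * h y * g 0 z + g 0 x * g 0 y * h z))) (at 0)"
  shows "(\<lambda>\<theta>. bT g \<theta> - 3 * \<theta> * (LINT x:{1..}|lborel. upsilon \<alpha> x * h x))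
           \<in> o[at 0](\<lambda>\<theta>. \<theta>)"
proof -
  have h_mean_zero: "(LINT x:{1..}|lborel. h x) = 0"
    using DERIV_local_const[OF diff_norm delta_pos] density delta_pos by simp
  have "(LINT x:{1..}|lborel. LINT y:{1..}|lborel. LINT z:{1..}|lborel. kernT x y z * g 0 x * g 0 y * g 0 z)
    = (LINT x:{1..}|lborel. LINT y:{1..}|lborel. LINT z:{1..}|lborel.
        kernT x y z * pareto_dens \<alpha> x * pareto_dens \<alpha> y * pareto_dens \<alpha> z)"
    by (rule set_triple_integral_cong) (simp_all add: g0)
  then have bT_0: "bT g 0 = 0"
    unfolding bT_def pareto_kernT_triple_integral[OF alpha_pos] by simp
  have "(LINT x:{1..}|lborel. LINT y:{1..}|lborel. LINT z:{1..}|lborel.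
           kernT x y z * (h x * g 0 y * g 0 z + g 0 x * h y * g 0 z + g 0 x * g 0 y * h z))
    = (LINT x:{1..}|lborel. LINT y:{1..}|lborel. LINT z:{1..}|lborel. kernT_deriv \<alpha> h x y z)"
    by (rule set_triple_integral_cong) (simp_all add: g0 kernT_deriv_def)
  also have "\<dots> = 3 * (LINT x:{1..}|lborel. upsilon \<alpha> x * h x)"
    unfolding kernT_deriv_triple_integral[OF alpha_pos h_int] upsilon_integral[OF alpha_pos h_int] h_mean_zero
    by simp
  finally show ?thesis
    using has_real_derivative_at_0_smallo[OF diff_bT bT_0] by (simp add: mult.assoc mult.left_commute)
qed

end
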